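(* Consider the FJ-FA system with availability one and locality two (defined in the context), with systematic service rate $\gamma$ and recovery service rates $\mu$, and let $\nu = \gamma+2\mu$. Then the limiting fractions $f_0$ and $f_1$ of requests served with type-0 and type-1 service satisfy $$f_0 \ge \frac{\gamma\nu}{\gamma\nu + 2\mu^2}, \qquad f_1 \le \frac{2\mu^2}{\gamma\nu + 2\mu^2}.$$
   Context: Three servers store $a$ (systematic server), $b$ and $a+b$ (the two servers of the single recovery group for $a$). Requests arrive as a Poisson process of rate $\lambda$, and every request asks for $a$ (FJ-FA). Each request is replicated into a copy at the systematic server and a copy at the recovery group; the latter is forked into one sub-copy at each of the two recovery servers and completes when both finish. The request completes as soon as its systematic copy finishes or its recovery-group copy completes, and all its outstanding copies/sub-copies are then removed immediately. Each server has a FCFS queue and serves one sub-copy at a time; service times are independent, $\mathrm{Exp}(\gamma)$ at the systematic server and $\mathrm{Exp}(\mu)$ at each recovery server. A request is at the head of the line (HoL) once all its copies still in the system are in service; at that moment it starts service. Its service is of type 1 if one of its two recovery sub-copies had already finished service before it reached HoL, and of type 0 otherwise. The system is assumed stable, and $f_0, f_1$ ($f_0+f_1=1$) are the limiting fractions of requests whose service is of type 0 and type 1 respectively. *)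

theory Defs
  imports "HOL-Probability.Probability"
begin

text \<open>Index type for the primitive random variables of the FJ-FA system:
  interarrival times, and the service times of request n at the systematic
  server (storing a) and at the two recovery servers (storing b and a+b).\<close>
datatype idx = Arr nat | SysS nat | RecB nat | RecC nat

definition arrival :: "(nat \<Rightarrow> real) \<Rightarrow> nat \<Rightarrow> real" where
  "arrival X n = (\<Sum>k\<le>n. X k)"

text \<open>Sample-path dynamics.  free A Sa Sb Sc n = times at which the systematic
  server and the two recovery servers become free of request n-1 (i.e. are
  available to request n).  A copy/sub-copy of request n at server s starts at
  T = max (A n) (free time), would finish at F = T + S, the request completes at
  C = min Fa (max Fb Fc), and server s is then freed at min F C (either the
  sub-copy finished or it was cancelled at completion).\<close>
fun free :: "(nat \<Rightarrow> real) \<Rightarrow> (nat \<Rightarrow> real) \<Rightarrow> (nat \<Rightarrow> real) \<Rightarrow> (nat \<Rightarrow> real)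
              \<Rightarrow> nat \<Rightarrow> real \<times> real \<times> real" where
  "free A Sa Sb Sc 0 = (0, 0, 0)"
| "free A Sa Sb Sc (Suc n) =
     (case free A Sa Sb Sc n of (ea, eb, ec) \<Rightarrow>
       let ta = max (A n) ea; tb = max (A n) eb; tc = max (A n) ec;
           fa = ta + Sa n; fb = tb + Sb n; fc = tc + Sc n;
           c = min fa (max fb fc)
       in (min fa c, min fb c, min fc c))"

text \<open>Request n has type-1 service iff one of its recovery sub-copies finished
  service strictly before the request reached the head of the line, i.e. before
  the time when all its copies still in the system are in service (the maximum
  of the service start times of its three copies).\<close>
definition type1 :: "(nat \<Rightarrow> real) \<Rightarrow> (nat \<Rightarrow> real) \<Rightarrow> (nat \<Rightarrow> real) \<Rightarrow> (nat \<Rightarrow> real)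
                      \<Rightarrow> nat \<Rightarrow> bool" where
  "type1 A Sa Sb Sc n =
     (case free A Sa Sb Sc n of (ea, eb, ec) \<Rightarrow>
       let ta = max (A n) ea; tb = max (A n) eb; tc = max (A n) ec;
           fb = tb + Sb n; fc = tc + Sc n;
           hol = max ta (max tb tc)
       in fb < hol \<or> fc < hol)"

definition req_type1 :: "(idx \<Rightarrow> 'w \<Rightarrow> real) \<Rightarrow> 'w \<Rightarrow> nat \<Rightarrow> bool" where
  "req_type1 Z \<omega> n =
     type1 (arrival (\<lambda>k. Z (Arr k) \<omega>)) (\<lambda>k. Z (SysS k) \<omega>) (\<lambda>k. Z (RecB k) \<omega>)
           (\<lambda>k. Z (RecC k) \<omega>) n"

definition frac1 :: "(idx \<Rightarrow> 'w \<Rightarrow> real) \<Rightarrow> 'w \<Rightarrow> nat \<Rightarrow> real" where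
  "frac1 Z \<omega> N = real (card {n \<in> {..<N}. req_type1 Z \<omega> n}) / real N"

definition frac0 :: "(idx \<Rightarrow> 'w \<Rightarrow> real) \<Rightarrow> 'w \<Rightarrow> nat \<Rightarrow> real" where
  "frac0 Z \<omega> N = real (card {n \<in> {..<N}. \<not> req_type1 Z \<omega> n}) / real N"

end

theory Submission
  imports Defs "HOL-Real_Asymp.Real_Asymp"
begin

text \<open>Let \<open>u\<^sub>n\<close>, \<open>v\<^sub>n\<close> be the times at which request \<open>n\<close> can start at the two recovery
  servers. The systematic server is always released together with the later of the two, so request
  \<open>n\<close> reaches the head of the line at \<open>max u\<^sub>n v\<^sub>n\<close>, and it is of type 1 iff one of its
  recovery sub-copies finishes before that time. The lead \<open>L\<^sub>n = \<bar>u\<^sub>n - v\<^sub>n\<bar>\<close> serves as a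
  potential: the service times of request \<open>n\<close> are fresh exponentials independent of
  \<open>(u\<^sub>n, v\<^sub>n)\<close>, and a direct computation gives
  \<open>E L\<^sub>n\<^sub>+\<^sub>1 \<le> E L\<^sub>n - c\<^sub>1 P(type 1) + c\<^sub>0 P(type 0)\<close> with
  \<open>c\<^sub>1 = \<gamma> / (\<mu> (\<gamma> + \<mu>))\<close> and \<open>c\<^sub>0 = 2\<mu> / ((\<gamma> + 2\<mu>) (\<gamma> + \<mu>))\<close>.
  Summing from \<open>L\<^sub>0 = 0\<close> gives \<open>c\<^sub>1 \<Sum> P(type 1) \<le> c\<^sub>0 \<Sum> P(type 0)\<close>, so the mean
  fraction of type-1 requests is at most \<open>c\<^sub>0 / (c\<^sub>1 + c\<^sub>0) = 2\<mu>\<^sup>2 / (\<gamma>\<nu> + 2\<mu>\<^sup>2)\<close>,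
  and dominated convergence passes this bound to \<open>f\<^sub>1\<close>.\<close>

section \<open>Sample paths\<close>

definition arrivals :: "(idx \<Rightarrow> real) \<Rightarrow> nat \<Rightarrow> real" where
  "arrivals z = arrival (\<lambda>k. z (Arr k))"

definition free_at :: "(idx \<Rightarrow> real) \<Rightarrow> nat \<Rightarrow> real \<times> real \<times> real" where
  "free_at z = free (arrivals z) (\<lambda>k. z (SysS k)) (\<lambda>k. z (RecB k)) (\<lambda>k. z (RecC k))"

definition start_b :: "(idx \<Rightarrow> real) \<Rightarrow> nat \<Rightarrow> real" where
  "start_b z n = max (arrivals z n) (fst (snd (free_at z n)))"

definition start_c :: "(idx \<Rightarrow> real) \<Rightarrow> nat \<Rightarrow> real" where
  "start_c z n = max (arrivals z n) (snd (snd (free_at z n)))"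

definition lead :: "(idx \<Rightarrow> real) \<Rightarrow> nat \<Rightarrow> real" where
  "lead z n = \<bar>start_b z n - start_c z n\<bar>"

text \<open>Type-1 service of a request whose recovery sub-copies start at \<open>u\<close>, \<open>v\<close> and need
  service times \<open>b\<close>, \<open>c\<close>; the request reaches the head of the line at \<open>max u v\<close>
  (see \<open>req_type1_iff\<close>).\<close>
definition early_recovery :: "real \<Rightarrow> real \<Rightarrow> real \<Rightarrow> real \<Rightarrow> bool" where
  "early_recovery u v b c \<longleftrightarrow> u + b < max u v \<or> v + c < max u v"

text \<open>The systematic copy is released at the completion time of the request, and so is the later
  recovery sub-copy, since the request cannot complete through its recovery group earlier.\<close>
lemma fst_free_eq_max:
  "fst (free A Sa Sb Sc n) = max (fst (snd (free A Sa Sb Sc n))) (snd (snd (free A Sa Sb Sc n)))"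
  by (cases n) (auto simp: split_beta Let_def min_def max_def)

lemma fst_free_at_eq_max: "fst (free_at z n) = max (fst (snd (free_at z n))) (snd (snd (free_at z n)))"
  unfolding free_at_def by (rule fst_free_eq_max)

lemma free_at_Suc:
  fixes z :: "idx \<Rightarrow> real" and n :: nat
  defines "u \<equiv> start_b z n" and "v \<equiv> start_c z n"
  defines "fa \<equiv> max u v + z (SysS n)" and "fb \<equiv> u + z (RecB n)" and "fc \<equiv> v + z (RecC n)"
  shows "free_at z (Suc n) =
    (min fa (min fa (max fb fc)), min fb (min fa (max fb fc)), min fc (min fa (max fb fc)))"
proof -
  obtain ea eb ec where e: "free_at z n = (ea, eb, ec)" by (cases "free_at z n") auto
  have "ea = max eb ec"
    using fst_free_at_eq_max[of z n] e by simp
  then have "max (arrivals z n) ea = max u v"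
    unfolding u_def v_def start_b_def start_c_def e by (simp add: max_def)
  moreover have "u = max (arrivals z n) eb" "v = max (arrivals z n) ec"
    unfolding u_def v_def start_b_def start_c_def e by simp_all
  ultimately show ?thesis
    using e unfolding fa_def fb_def fc_def free_at_def by (simp only: free.simps prod.case Let_def)
qed

lemma lead_0 [simp]: "lead z 0 = 0"
  by (simp add: lead_def start_b_def start_c_def free_at_def)

lemma lead_Suc_le:
  fixes z :: "idx \<Rightarrow> real" and n :: nat
  defines "u \<equiv> start_b z n" and "v \<equiv> start_c z n"
  shows "lead z (Suc n) \<le>
    \<bar>min (max u v + z (SysS n)) (u + z (RecB n)) - min (max u v + z (SysS n)) (v + z (RecC n))\<bar>"
proof -
  have max_lipschitz: "\<bar>max x p - max x q\<bar> \<le> \<bar>p - q\<bar>" for x p q :: real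
    by (simp add: max_def abs_if)
  have cancel: "\<bar>min b (min a (max b c)) - min c (min a (max b c))\<bar> = \<bar>min a b - min a c\<bar>"
    for a b c :: real
    by (simp add: min_def max_def)
  show ?thesis
    using max_lipschitz[of "arrivals z (Suc n)" "fst (snd (free_at z (Suc n)))" "snd (snd (free_at z (Suc n)))"]
    unfolding lead_def start_b_def start_c_def
    by (simp only: free_at_Suc u_def v_def start_b_def start_c_def fst_conv snd_conv cancel)
qed

lemma req_type1_iff:
  "req_type1 Z \<omega> n \<longleftrightarrow>
     early_recovery (start_b (\<lambda>i. Z i \<omega>) n) (start_c (\<lambda>i. Z i \<omega>) n) (Z (RecB n) \<omega>) (Z (RecC n) \<omega>)"
proof -
  let ?z = "\<lambda>i. Z i \<omega>"
  obtain ea eb ec where e: "free_at ?z n = (ea, eb, ec)" by (cases "free_at ?z n") auto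
  have "ea = max eb ec"
    using fst_free_at_eq_max[of ?z n] e by simp
  moreover have "max (max a (max b c)) (max (max a b) (max a c)) = max (max a b) (max a c)"
    for a b c :: real
    by (simp add: max_def)
  ultimately show ?thesis
    using e unfolding req_type1_def type1_def early_recovery_def start_b_def start_c_def
    by (simp add: free_at_def arrivals_def Let_def)
qed

definition past_idx :: "nat \<Rightarrow> idx set" where
  "past_idx n = Arr ` {..n} \<union> SysS ` {..<n} \<union> RecB ` {..<n} \<union> RecC ` {..<n}"

lemma finite_past_idx: "finite (past_idx n)"
  by (simp add: past_idx_def)

lemma free_cong:
  assumes "\<And>k. k < n \<Longrightarrow> A k = A' k \<and> Sa k = Sa' k \<and> Sb k = Sb' k \<and> Sc k = Sc' k"
  shows "free A Sa Sb Sc n = free A' Sa' Sb' Sc' n"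
  using assms by (induction n) (simp_all only: free.simps less_Suc_eq, auto)

lemma start_cong:
  assumes "\<And>i. i \<in> past_idx n \<Longrightarrow> z i = z' i"
  shows "start_b z n = start_b z' n" "start_c z n = start_c z' n"
proof -
  have arr: "arrivals z k = arrivals z' k" if "k \<le> n" for k
    unfolding arrivals_def arrival_def using that assms by (intro sum.cong) (auto simp: past_idx_def)
  have "free_at z n = free_at z' n"
    unfolding free_at_def by (rule free_cong) (use arr assms in \<open>auto simp: past_idx_def\<close>)
  then show "start_b z n = start_b z' n" "start_c z n = start_c z' n"
    unfolding start_b_def start_c_def using arr by auto
qed

lemma measurable_free:
  assumes [measurable]: "\<And>k. (\<lambda>x. A x k) \<in> borel_measurable N" "\<And>k. (\<lambda>x. Sa x k) \<in> borel_measurable N"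
    "\<And>k. (\<lambda>x. Sb x k) \<in> borel_measurable N" "\<And>k. (\<lambda>x. Sc x k) \<in> borel_measurable N"
  shows "(\<lambda>x. fst (free (A x) (Sa x) (Sb x) (Sc x) n)) \<in> borel_measurable N
    \<and> (\<lambda>x. fst (snd (free (A x) (Sa x) (Sb x) (Sc x) n))) \<in> borel_measurable N
    \<and> (\<lambda>x. snd (snd (free (A x) (Sa x) (Sb x) (Sc x) n))) \<in> borel_measurable N"
proof (induction n)
  case (Suc n)
  then have [measurable]: "(\<lambda>x. fst (free (A x) (Sa x) (Sb x) (Sc x) n)) \<in> borel_measurable N"
    "(\<lambda>x. fst (snd (free (A x) (Sa x) (Sb x) (Sc x) n))) \<in> borel_measurable N"
    "(\<lambda>x. snd (snd (free (A x) (Sa x) (Sb x) (Sc x) n))) \<in> borel_measurable N"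
    by simp_all
  show ?case by (simp add: split_beta Let_def)
qed simp

lemma measurable_start:
  assumes [measurable]: "\<And>i. (\<lambda>x. z x i) \<in> borel_measurable N"
  shows "(\<lambda>x. start_b (z x) n) \<in> borel_measurable N" "(\<lambda>x. start_c (z x) n) \<in> borel_measurable N"
proof -
  have [measurable]: "(\<lambda>x. arrivals (z x) k) \<in> borel_measurable N" for k
    unfolding arrivals_def arrival_def by measurable
  have [measurable]: "(\<lambda>x. fst (snd (free_at (z x) n))) \<in> borel_measurable N"
    "(\<lambda>x. snd (snd (free_at (z x) n))) \<in> borel_measurable N"
    using measurable_free[of "\<lambda>x. arrivals (z x)" N "\<lambda>x k. z x (SysS k)" "\<lambda>x k. z x (RecB k)"
        "\<lambda>x k. z x (RecC k)" n]
    by (simp_all add: free_at_def)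
  show "(\<lambda>x. start_b (z x) n) \<in> borel_measurable N" "(\<lambda>x. start_c (z x) n) \<in> borel_measurable N"
    unfolding start_b_def start_c_def by measurable
qed

section \<open>Exponential service times\<close>

abbreviation exp_dist :: "real \<Rightarrow> real measure" where
  "exp_dist l \<equiv> density lborel (exponential_density l)"

text \<open>Joint law of the service times \<open>(c, b, a)\<close> of one request at the servers storing
  \<open>a + b\<close>, \<open>b\<close> and \<open>a\<close>, in this nesting order.\<close>
abbreviation services :: "real \<Rightarrow> real \<Rightarrow> (real \<times> real \<times> real) measure" where
  "services g m \<equiv> exp_dist m \<Otimes>\<^sub>M (exp_dist m \<Otimes>\<^sub>M exp_dist g)"

definition exp_cdf :: "real \<Rightarrow> real \<Rightarrow> real" where
  "exp_cdf l s = (if 0 \<le> s then 1 - exp (- l * s) else 0)"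

definition exp_tail :: "real \<Rightarrow> real \<Rightarrow> real" where
  "exp_tail l s = (if 0 \<le> s then exp (- l * s) else 1)"

lemma exp_cdf_nonneg: "0 < l \<Longrightarrow> 0 \<le> exp_cdf l s"
  by (simp add: exp_cdf_def)

lemma exp_tail_nonneg: "0 \<le> exp_tail l s"
  by (simp add: exp_tail_def)

lemma emeasure_exp_dist_atMost:
  assumes "0 < l" shows "emeasure (exp_dist l) {..s} = ennreal (exp_cdf l s)"
  using emeasure_erlang_density[OF assms, of 0 s] by (simp add: erlang_CDF_0 exp_cdf_def)

lemma emeasure_exp_dist_greaterThan:
  assumes l: "0 < l" shows "emeasure (exp_dist l) {s<..} = ennreal (exp_tail l s)"
proof -
  interpret prob_space "exp_dist l" by (rule prob_space_exponential_density[OF l])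
  have "{s<..} = space (exp_dist l) - {..s}" by auto
  then have "prob {s<..} = 1 - prob {..s}" using prob_compl[of "{..s}"] by simp
  moreover have "prob {..s} = exp_cdf l s"
    using emeasure_exp_dist_atMost[OF l, of s] exp_cdf_nonneg[OF l, of s]
    by (simp add: emeasure_eq_measure)
  ultimately show ?thesis by (simp add: emeasure_eq_measure exp_tail_def exp_cdf_def)
qed

lemma emeasure_exp_dist_UNIV: "0 < l \<Longrightarrow> emeasure (exp_dist l) UNIV = 1"
  using prob_space.emeasure_space_1[OF prob_space_exponential_density] by simp

lemma prob_space_services: "0 < g \<Longrightarrow> 0 < m \<Longrightarrow> prob_space (services g m)"
  by (intro prob_space_pair prob_space_exponential_density)

lemma emeasure_services_Times:
  assumes "0 < g" "0 < m" and "A \<in> sets borel" "B \<in> sets borel" "C \<in> sets borel"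
  shows "emeasure (services g m) (A \<times> B \<times> C)
       = emeasure (exp_dist m) A * emeasure (exp_dist m) B * emeasure (exp_dist g) C"
proof -
  interpret g: prob_space "exp_dist g" by (rule prob_space_exponential_density) fact
  interpret m: prob_space "exp_dist m" by (rule prob_space_exponential_density) fact
  interpret mg: prob_space "exp_dist m \<Otimes>\<^sub>M exp_dist g" by (rule prob_space_pair) unfold_locales
  show ?thesis
    using assms(3-)
    by (simp add: mg.emeasure_pair_measure_Times g.emeasure_pair_measure_Times pair_measureI mult.assoc)
qed

lemma nn_integral_services:
  assumes "0 < g" "0 < m" and [measurable]: "f \<in> borel_measurable (services g m)"
  shows "(\<integral>\<^sup>+q. f q \<partial>services g m) = (\<integral>\<^sup>+c. \<integral>\<^sup>+b. \<integral>\<^sup>+a. f (c, b, a) \<partial>exp_dist g \<partial>exp_dist m \<partial>exp_dist m)"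
proof -
  interpret g: prob_space "exp_dist g" by (rule prob_space_exponential_density) fact
  interpret m: prob_space "exp_dist m" by (rule prob_space_exponential_density) fact
  interpret mg: prob_space "exp_dist m \<Otimes>\<^sub>M exp_dist g" by (rule prob_space_pair) unfold_locales
  have "(\<integral>\<^sup>+q. f q \<partial>services g m) = (\<integral>\<^sup>+c. \<integral>\<^sup>+p. f (c, p) \<partial>(exp_dist m \<Otimes>\<^sub>M exp_dist g) \<partial>exp_dist m)"
    by (rule mg.nn_integral_fst[symmetric]) simp
  also have "\<dots> = (\<integral>\<^sup>+c. \<integral>\<^sup>+b. \<integral>\<^sup>+a. f (c, b, a) \<partial>exp_dist g \<partial>exp_dist m \<partial>exp_dist m)"
    by (intro nn_integral_cong g.nn_integral_fst[symmetric]) measurable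
  finally show ?thesis .
qed

section \<open>One-step drift of the lead\<close>

lemma abs_min_diff_eq_emeasure:
  fixes p x y :: real
  shows "ennreal \<bar>min p x - min p y\<bar> = emeasure lborel {min x y ..< min p (max x y)}"
proof (cases "min x y \<le> min p (max x y)")
  case True
  then have "min p (max x y) - min x y = \<bar>min p x - min p y\<bar>"
    by (cases "x \<le> y"; cases "p \<le> x"; cases "p \<le> y"; simp add: min_def max_def)
  then show ?thesis using True by simp
next
  case False
  then show ?thesis by (auto simp: min_def max_def split: if_splits)
qed

lemma nn_integral_services_abs_min_diff:
  assumes g: "0 < g" and m: "0 < m"
  shows "(\<integral>\<^sup>+(c, b, a). ennreal \<bar>min (w + a) (u + b) - min (w + a) (v + c)\<bar> \<partial>services g m)
    = (\<integral>\<^sup>+t. ennreal (exp_tail g (t - w) *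
          (exp_cdf m (t - u) * exp_tail m (t - v) + exp_cdf m (t - v) * exp_tail m (t - u))) \<partial>lborel)"
proof -
  interpret S: prob_space "services g m" by (rule prob_space_services[OF g m])
  interpret SL: pair_sigma_finite "services g m" lborel ..
  define I where "I = (\<lambda>(c, b, a). {min (u + b) (v + c) ..< min (w + a) (max (u + b) (v + c))})"
  have "(\<integral>\<^sup>+(c, b, a). ennreal \<bar>min (w + a) (u + b) - min (w + a) (v + c)\<bar> \<partial>services g m)
      = (\<integral>\<^sup>+q. \<integral>\<^sup>+t. indicator (I q) t \<partial>lborel \<partial>services g m)"
    by (intro nn_integral_cong) (auto simp: abs_min_diff_eq_emeasure I_def)
  also have "\<dots> = (\<integral>\<^sup>+t. \<integral>\<^sup>+q. indicator (I q) t \<partial>services g m \<partial>lborel)"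
    by (rule SL.Fubini'[symmetric]) (simp add: I_def indicator_def split_beta)
  also have "\<dots> = (\<integral>\<^sup>+t. ennreal (exp_tail g (t - w) *
          (exp_cdf m (t - u) * exp_tail m (t - v) + exp_cdf m (t - v) * exp_tail m (t - u))) \<partial>lborel)"
  proof (rule nn_integral_cong)
    fix t
    define A1 where "A1 = {t - v <..} \<times> {.. t - u} \<times> {t - w <..}"
    define A2 where "A2 = {.. t - v} \<times> {t - u <..} \<times> {t - w <..}"
    have "indicator (I q) t = indicator A1 q + (indicator A2 q :: ennreal)" for q
      by (cases q) (auto simp: I_def A1_def A2_def indicator_def)
    then have "(\<integral>\<^sup>+q. indicator (I q) t \<partial>services g m)
        = emeasure (services g m) A1 + emeasure (services g m) A2"
      by (simp add: A1_def A2_def nn_integral_add pair_measureI)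
    also have "\<dots> = ennreal (exp_tail m (t - v) * exp_cdf m (t - u) * exp_tail g (t - w)
                         + exp_cdf m (t - v) * exp_tail m (t - u) * exp_tail g (t - w))"
      using exp_cdf_nonneg[OF m] exp_tail_nonneg
      by (simp add: A1_def A2_def emeasure_services_Times[OF g m] emeasure_exp_dist_atMost
          emeasure_exp_dist_greaterThan g m ennreal_mult ennreal_plus)
    finally show "(\<integral>\<^sup>+q. indicator (I q) t \<partial>services g m) = ennreal (exp_tail g (t - w) *
          (exp_cdf m (t - u) * exp_tail m (t - v) + exp_cdf m (t - v) * exp_tail m (t - u)))"
      by (simp add: algebra_simps)
  qed
  finally show ?thesis .
qed

lemma one_minus_exp_neg_div_le:
  fixes m x :: real
  assumes "0 < m"
  shows "(1 - exp (- m * x)) / m \<le> x"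
  using exp_ge_add_one_self[of "- m * x"] assms by (simp add: field_simps)

lemma exp_mix_coeff_le:
  fixes g m z :: real
  assumes "0 < g" "0 < m" "0 \<le> z" "z \<le> 1"
  shows "2 * z / (g + 2 * m) \<le> (1 + z) / (g + m)"
  using assms by (simp add: frac_le)

lemma nn_integral_one_minus_exp_Icc:
  fixes m u v :: real
  assumes m: "0 < m" and uv: "u \<le> v"
  shows "(\<integral>\<^sup>+t. ennreal (1 - exp (- m * (t - u))) * indicator {u..v} t \<partial>lborel)
       = ennreal (v - u - (1 - exp (- m * (v - u))) / m)"
proof -
  have "(\<integral>\<^sup>+t. ennreal (1 - exp (- m * (t - u))) * indicator {u..v} t \<partial>lborel)
      = ennreal ((v + exp (- m * (v - u)) / m) - (u + exp (- m * (u - u)) / m))"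
  proof (rule nn_integral_FTC_Icc)
    show "DERIV (\<lambda>t. t + exp (- m * (t - u)) / m) x :> 1 - exp (- m * (x - u))" for x
      using m by (auto intro!: derivative_eq_intros simp: field_simps)
  qed (use uv m in auto)
  also have "\<dots> = ennreal (v - u - (1 - exp (- m * (v - u))) / m)"
    by (simp add: diff_divide_distrib algebra_simps)
  finally show ?thesis .
qed

lemma nn_integral_exp_mix_atLeast:
  fixes g m v z :: real
  assumes g: "0 < g" and m: "0 < m" and z: "0 \<le> z" "z \<le> 1"
  shows "(\<integral>\<^sup>+t. ennreal ((1 + z) * exp (- (g + m) * (t - v)) - 2 * z * exp (- (g + 2 * m) * (t - v)))
            * indicator {v..} t \<partial>lborel)
       = ennreal ((1 + z) / (g + m) - 2 * z / (g + 2 * m))"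
proof -
  define F where "F t = 2 * z * (exp (- (g + 2 * m) * (t - v)) / (g + 2 * m))
                        - (1 + z) * (exp (- (g + m) * (t - v)) / (g + m))" for t
  have DERIV_decay: "DERIV (\<lambda>t. exp (- k * (t - v)) / k) x :> - exp (- k * (x - v))"
    if "k \<noteq> 0" for k x
    using that by (auto intro!: derivative_eq_intros)
  have "(\<integral>\<^sup>+t. ennreal ((1 + z) * exp (- (g + m) * (t - v)) - 2 * z * exp (- (g + 2 * m) * (t - v)))
            * indicator {v..} t \<partial>lborel) = ennreal (0 - F v)"
  proof (rule nn_integral_FTC_atLeast)
    show "DERIV F x :> (1 + z) * exp (- (g + m) * (x - v)) - 2 * z * exp (- (g + 2 * m) * (x - v))" for x
    proof -
      have "DERIV F x :> 2 * z * - exp (- (g + 2 * m) * (x - v)) - (1 + z) * - exp (- (g + m) * (x - v))"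
        unfolding F_def using g m by (intro DERIV_diff DERIV_cmult DERIV_decay) auto
      then show ?thesis by (simp add: algebra_simps)
    qed
    show "0 \<le> (1 + z) * exp (- (g + m) * (x - v)) - 2 * z * exp (- (g + 2 * m) * (x - v))"
      if "v \<le> x" for x
    proof -
      have "2 * z * exp (- (g + 2 * m) * (x - v)) \<le> 2 * z * exp (- (g + m) * (x - v))"
        using that m z by (intro mult_left_mono) (auto simp: mult_right_mono)
      also have "\<dots> \<le> (1 + z) * exp (- (g + m) * (x - v))"
        using z by (intro mult_right_mono) auto
      finally show ?thesis by simp
    qed
    have decay: "((\<lambda>t. exp (- k * (t - v))) \<longlongrightarrow> 0) at_top" if "0 < k" for k
      using that by real_asymp
    have "(F \<longlongrightarrow> 2 * z * (0 / (g + 2 * m)) - (1 + z) * (0 / (g + m))) at_top"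
      unfolding F_def using g m by (intro tendsto_intros decay) auto
    then show "(F \<longlongrightarrow> 0) at_top" by simp
  qed simp
  then show ?thesis by (simp add: F_def)
qed

lemma abs_min_diff_density_eq:
  fixes g m u v t :: real
  assumes uv: "u \<le> v"
  defines "z \<equiv> exp (- m * (v - u))"
  shows "exp_tail g (t - v) * (exp_cdf m (t - u) * exp_tail m (t - v) + exp_cdf m (t - v) * exp_tail m (t - u))
    = (if t < u then 0 else if t < v then 1 - exp (- m * (t - u))
       else (1 + z) * exp (- (g + m) * (t - v)) - 2 * z * exp (- (g + 2 * m) * (t - v)))"
proof -
  have "exp (- m * (t - u)) = exp (- m * (t - v)) * z"
    "exp (- (g + m) * (t - v)) = exp (- g * (t - v)) * exp (- m * (t - v))"
    "exp (- (g + 2 * m) * (t - v)) = exp (- g * (t - v)) * exp (- m * (t - v)) * exp (- m * (t - v))"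
    unfolding z_def by (simp_all add: exp_add[symmetric] algebra_simps)
  then show ?thesis
    using uv by (simp add: exp_cdf_def exp_tail_def algebra_simps)
qed

lemma nn_integral_abs_min_diff_density_le:
  fixes g m u v :: real
  assumes g: "0 < g" and m: "0 < m" and uv: "u \<le> v"
  defines "z \<equiv> exp (- m * (v - u))"
  shows "(\<integral>\<^sup>+t. ennreal (exp_tail g (t - v) *
            (exp_cdf m (t - u) * exp_tail m (t - v) + exp_cdf m (t - v) * exp_tail m (t - u))) \<partial>lborel)
       \<le> ennreal (v - u - (1 - z) / m + (1 + z) / (g + m) - 2 * z / (g + 2 * m))"
proof -
  have z: "0 \<le> z" "z \<le> 1" using m uv by (auto simp: z_def)
  define f1 where "f1 t = 1 - exp (- m * (t - u))" for t
  define f2 where "f2 t = (1 + z) * exp (- (g + m) * (t - v)) - 2 * z * exp (- (g + 2 * m) * (t - v))" for t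
  have "(\<integral>\<^sup>+t. ennreal (exp_tail g (t - v) *
            (exp_cdf m (t - u) * exp_tail m (t - v) + exp_cdf m (t - v) * exp_tail m (t - u))) \<partial>lborel)
      \<le> (\<integral>\<^sup>+t. ennreal (f1 t) * indicator {u..v} t + ennreal (f2 t) * indicator {v..} t \<partial>lborel)"
    by (rule nn_integral_mono)
      (auto simp: abs_min_diff_density_eq[OF uv] f1_def f2_def z_def indicator_def)
  also have "\<dots> = (\<integral>\<^sup>+t. ennreal (f1 t) * indicator {u..v} t \<partial>lborel)
                  + (\<integral>\<^sup>+t. ennreal (f2 t) * indicator {v..} t \<partial>lborel)"
    by (rule nn_integral_add) (auto simp: f1_def f2_def)
  also have "\<dots> = ennreal (v - u - (1 - z) / m) + ennreal ((1 + z) / (g + m) - 2 * z / (g + 2 * m))"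
    unfolding f1_def f2_def z_def
    using nn_integral_one_minus_exp_Icc[OF m uv] nn_integral_exp_mix_atLeast[OF g m z[unfolded z_def]]
    by simp
  also have "\<dots> = ennreal (v - u - (1 - z) / m + (1 + z) / (g + m) - 2 * z / (g + 2 * m))"
    using one_minus_exp_neg_div_le[OF m, of "v - u"] exp_mix_coeff_le[OF g m z]
    by (simp add: z_def flip: ennreal_plus)
  finally show ?thesis .
qed

lemma nn_integral_services_abs_min_diff_le:
  fixes g m u v :: real
  assumes g: "0 < g" and m: "0 < m"
  defines "z \<equiv> exp (- m * \<bar>u - v\<bar>)"
  shows "(\<integral>\<^sup>+(c, b, a). ennreal \<bar>min (max u v + a) (u + b) - min (max u v + a) (v + c)\<bar> \<partial>services g m)
       \<le> ennreal (\<bar>u - v\<bar> - (1 - z) / m + (1 + z) / (g + m) - 2 * z / (g + 2 * m))"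
proof (cases "u \<le> v")
  case True
  then show ?thesis
    using nn_integral_abs_min_diff_density_le[OF g m True]
    by (simp add: nn_integral_services_abs_min_diff[OF g m] z_def max_def)
next
  case False
  have "(\<integral>\<^sup>+(c, b, a). ennreal \<bar>min (max u v + a) (u + b) - min (max u v + a) (v + c)\<bar> \<partial>services g m)
      = (\<integral>\<^sup>+t. ennreal (exp_tail g (t - u) *
            (exp_cdf m (t - u) * exp_tail m (t - v) + exp_cdf m (t - v) * exp_tail m (t - u))) \<partial>lborel)"
    using False by (simp add: nn_integral_services_abs_min_diff[OF g m] max_def)
  also have "\<dots> = (\<integral>\<^sup>+t. ennreal (exp_tail g (t - u) *
            (exp_cdf m (t - v) * exp_tail m (t - u) + exp_cdf m (t - u) * exp_tail m (t - v))) \<partial>lborel)"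
    by (simp add: add.commute)
  also have "\<dots> \<le> ennreal (\<bar>u - v\<bar> - (1 - z) / m + (1 + z) / (g + m) - 2 * z / (g + 2 * m))"
    using nn_integral_abs_min_diff_density_le[OF g m, of v u] False by (simp add: z_def)
  finally show ?thesis .
qed

lemma nn_integral_services_early_recovery_le:
  fixes g m u v k :: real
  assumes g: "0 < g" and m: "0 < m" and k: "0 \<le> k"
  shows "(\<integral>\<^sup>+(c, b, a). (if early_recovery u v b c then ennreal k else 0) \<partial>services g m)
       \<le> ennreal (k * (1 - exp (- m * \<bar>u - v\<bar>)))"
proof -
  define S1 :: "(real \<times> real \<times> real) set" where "S1 = UNIV \<times> {.. max u v - u} \<times> UNIV"
  define S2 :: "(real \<times> real \<times> real) set" where "S2 = {.. max u v - v} \<times> UNIV \<times> UNIV"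
  have S: "S1 \<in> sets (services g m)" "S2 \<in> sets (services g m)"
    unfolding S1_def S2_def by (intro pair_measureI; simp add: space_in_borel)+
  have "(\<integral>\<^sup>+(c, b, a). (if early_recovery u v b c then ennreal k else 0) \<partial>services g m)
      \<le> (\<integral>\<^sup>+q. ennreal k * indicator S1 q + ennreal k * indicator S2 q \<partial>services g m)"
    by (rule nn_integral_mono) (auto simp: early_recovery_def S1_def S2_def indicator_def split: if_splits)
  also have "\<dots> = ennreal k * emeasure (services g m) S1 + ennreal k * emeasure (services g m) S2"
    using S by (simp add: nn_integral_add nn_integral_cmult_indicator)
  also have "\<dots> = ennreal (k * (exp_cdf m (max u v - u) + exp_cdf m (max u v - v)))"
  proof -
    have "emeasure (services g m) S1 = ennreal (exp_cdf m (max u v - u))"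
      "emeasure (services g m) S2 = ennreal (exp_cdf m (max u v - v))"
      unfolding S1_def S2_def
      by (subst emeasure_services_Times[OF g m];
          simp add: emeasure_exp_dist_UNIV emeasure_exp_dist_atMost g m space_in_borel)+
    then show ?thesis
      using exp_cdf_nonneg[OF m] k by (simp add: ennreal_mult ennreal_plus distrib_left)
  qed
  also have "\<dots> = ennreal (k * (1 - exp (- m * \<bar>u - v\<bar>)))"
    by (simp add: exp_cdf_def max_def abs_if)
  finally show ?thesis .
qed

lemma nn_integral_services_not_early_recovery_ge:
  fixes g m u v k :: real
  assumes g: "0 < g" and m: "0 < m" and k: "0 \<le> k"
  shows "ennreal (k * exp (- m * \<bar>u - v\<bar>))
       \<le> (\<integral>\<^sup>+(c, b, a). (if early_recovery u v b c then 0 else ennreal k) \<partial>services g m)"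
proof -
  define S :: "(real \<times> real \<times> real) set" where "S = {max u v - v <..} \<times> {max u v - u <..} \<times> UNIV"
  have "S \<in> sets (services g m)"
    unfolding S_def by (intro pair_measureI; simp add: space_in_borel)+
  moreover have "emeasure (services g m) S = ennreal (exp_tail m (max u v - v) * exp_tail m (max u v - u))"
    unfolding S_def
    by (subst emeasure_services_Times[OF g m];
        simp add: emeasure_exp_dist_UNIV emeasure_exp_dist_greaterThan g m space_in_borel
        ennreal_mult exp_tail_nonneg)
  moreover have "exp_tail m (max u v - v) * exp_tail m (max u v - u) = exp (- m * \<bar>u - v\<bar>)"
    by (simp add: exp_tail_def max_def abs_if)
  ultimately have "ennreal (k * exp (- m * \<bar>u - v\<bar>)) = (\<integral>\<^sup>+q. ennreal k * indicator S q \<partial>services g m)"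
    using k by (simp add: nn_integral_cmult_indicator ennreal_mult)
  also have "\<dots> \<le> (\<integral>\<^sup>+(c, b, a). (if early_recovery u v b c then 0 else ennreal k) \<partial>services g m)"
    by (rule nn_integral_mono) (auto simp: early_recovery_def S_def indicator_def)
  finally show ?thesis .
qed

text \<open>The weights \<open>c\<^sub>1\<close>, \<open>c\<^sub>0\<close> are exactly those for which the conditional drift below
  balances whatever the lead \<open>L\<close>; this is where the bound of the theorem comes from.\<close>
lemma lead_drift_balance:
  fixes g m L z :: real
  assumes "0 < g" "0 < m"
  shows "g / (m * (g + m)) * (1 - z) + (L - (1 - z) / m + (1 + z) / (g + m) - 2 * z / (g + 2 * m))
       = L + 2 * m / ((g + 2 * m) * (g + m)) * z"
proof -
  have partial_fractions: "g / (m * (g + m)) = 1 / m - 1 / (g + m)"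
    "2 * m / ((g + 2 * m) * (g + m)) = 2 / (g + m) - 2 / (g + 2 * m)"
    using assms by (simp_all add: field_simps)
  show ?thesis unfolding partial_fractions by (simp add: divide_inverse algebra_simps)
qed

lemma conditional_lead_drift:
  fixes g m u v :: real
  assumes g: "0 < g" and m: "0 < m"
  defines "c1 \<equiv> g / (m * (g + m))" and "c0 \<equiv> 2 * m / ((g + 2 * m) * (g + m))"
  shows "(\<integral>\<^sup>+(c, b, a). (if early_recovery u v b c then ennreal c1 else 0)
            + ennreal \<bar>min (max u v + a) (u + b) - min (max u v + a) (v + c)\<bar> \<partial>services g m)
       \<le> (\<integral>\<^sup>+(c, b, a). ennreal \<bar>u - v\<bar> + (if early_recovery u v b c then 0 else ennreal c0)
            \<partial>services g m)"
proof -
  interpret prob_space "services g m" by (rule prob_space_services[OF g m])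
  define z where "z = exp (- m * \<bar>u - v\<bar>)"
  define gap where "gap = \<bar>u - v\<bar> - (1 - z) / m + (1 + z) / (g + m) - 2 * z / (g + 2 * m)"
  have c: "0 \<le> c1" "0 \<le> c0" using g m by (simp_all add: c1_def c0_def)
  have z: "0 \<le> z" "z \<le> 1" using m by (simp_all add: z_def)
  have gap: "0 \<le> gap"
    using one_minus_exp_neg_div_le[OF m, of "\<bar>u - v\<bar>"] exp_mix_coeff_le[OF g m z]
    unfolding gap_def z_def by linarith
  have "(\<integral>\<^sup>+(c, b, a). (if early_recovery u v b c then ennreal c1 else 0)
            + ennreal \<bar>min (max u v + a) (u + b) - min (max u v + a) (v + c)\<bar> \<partial>services g m)
      = (\<integral>\<^sup>+(c, b, a). (if early_recovery u v b c then ennreal c1 else 0) \<partial>services g m)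
        + (\<integral>\<^sup>+(c, b, a). ennreal \<bar>min (max u v + a) (u + b) - min (max u v + a) (v + c)\<bar> \<partial>services g m)"
    by (subst nn_integral_add[symmetric]) (auto simp: case_prod_unfold early_recovery_def)
  also have "\<dots> \<le> ennreal (c1 * (1 - z)) + ennreal gap"
    unfolding z_def gap_def
    by (intro add_mono nn_integral_services_early_recovery_le nn_integral_services_abs_min_diff_le g m c)
  also have "\<dots> = ennreal \<bar>u - v\<bar> + ennreal (c0 * z)"
  proof -
    have "c1 * (1 - z) + gap = \<bar>u - v\<bar> + c0 * z"
      unfolding c1_def c0_def gap_def by (rule lead_drift_balance[OF g m])
    moreover have "0 \<le> c1 * (1 - z)" "0 \<le> c0 * z"
      using c z by simp_all
    ultimately show ?thesis
      using gap by (simp flip: ennreal_plus)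
  qed
  also have "\<dots> \<le> ennreal \<bar>u - v\<bar>
        + (\<integral>\<^sup>+(c, b, a). (if early_recovery u v b c then 0 else ennreal c0) \<partial>services g m)"
    unfolding z_def by (intro add_left_mono nn_integral_services_not_early_recovery_ge g m c)
  also have "\<dots> = (\<integral>\<^sup>+q. ennreal \<bar>u - v\<bar> \<partial>services g m)
        + (\<integral>\<^sup>+(c, b, a). (if early_recovery u v b c then 0 else ennreal c0) \<partial>services g m)"
    by (simp add: emeasure_space_1)
  also have "\<dots> = (\<integral>\<^sup>+(c, b, a). ennreal \<bar>u - v\<bar> + (if early_recovery u v b c then 0 else ennreal c0)
            \<partial>services g m)"
    unfolding case_prod_unfold by (rule nn_integral_add[symmetric]) (auto simp: early_recovery_def)
  finally show ?thesis .
qed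

section \<open>Independence of the current services from the past\<close>

lemma measurable_component_PiM_borel:
  "(\<lambda>x. x i) \<in> borel_measurable (PiM J (\<lambda>_. borel :: real measure))"
proof (cases "i \<in> J")
  case False
  then have "\<forall>x \<in> space (PiM J (\<lambda>_. borel :: real measure)). x i = undefined"
    by (auto simp: space_PiM PiE_def extensional_def)
  then show ?thesis by (subst measurable_cong[where g = "\<lambda>_. undefined"]) auto
qed simp

lemma measurable_start_services_PiM:
  fixes \<Phi> :: "real \<Rightarrow> real \<Rightarrow> real \<times> real \<times> real \<Rightarrow> ennreal"
  assumes \<Phi>_meas: "(\<lambda>(u, v, q). \<Phi> u v q) \<in> borel_measurable (borel \<Otimes>\<^sub>M borel \<Otimes>\<^sub>M services g m)"
  shows "(\<lambda>x. \<Phi> (start_b x n) (start_c x n) (x (RecC n), x (RecB n), x (SysS n)))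
    \<in> borel_measurable (PiM J (\<lambda>_. borel))"
proof -
  let ?B = "PiM J (\<lambda>_. borel :: real measure)"
  have [measurable]: "(\<lambda>x. x i) \<in> borel_measurable ?B" for i
    by (rule measurable_component_PiM_borel)
  have [measurable]: "(\<lambda>x. start_b x n) \<in> borel_measurable ?B" "(\<lambda>x. start_c x n) \<in> borel_measurable ?B"
    by (rule measurable_start[of "\<lambda>x. x", simplified]; simp)+
  have "(\<lambda>x. (start_b x n, start_c x n, x (RecC n), x (RecB n), x (SysS n)))
      \<in> ?B \<rightarrow>\<^sub>M borel \<Otimes>\<^sub>M borel \<Otimes>\<^sub>M services g m"
    by measurable
  from measurable_comp[OF this \<Phi>_meas] show ?thesis
    by (simp add: comp_def)
qed

lemma (in product_sigma_finite) borel_measurable_nn_integral_update: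
  assumes "f \<in> borel_measurable (PiM (insert i I) M)"
  shows "(\<lambda>y. \<integral>\<^sup>+a. f (y(i := a)) \<partial>M i) \<in> borel_measurable (PiM I M)"
proof -
  have "(\<lambda>(y, a). f (y(i := a))) \<in> borel_measurable (PiM I M \<Otimes>\<^sub>M M i)"
    using measurable_comp[OF measurable_add_dim assms] by (simp add: comp_def case_prod_beta)
  then show ?thesis
    by (rule sigma_finite_measure.borel_measurable_nn_integral[OF sigma_finite_measures, simplified])
qed

lemma (in product_sigma_finite) product_nn_integral_insert3:
  assumes "finite I" and "i \<notin> insert j (insert k I)" "j \<notin> insert k I" "k \<notin> I"
    and f: "f \<in> borel_measurable (PiM (insert i (insert j (insert k I))) M)"
  shows "integral\<^sup>N (PiM (insert i (insert j (insert k I))) M) f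
    = (\<integral>\<^sup>+x. \<integral>\<^sup>+c. \<integral>\<^sup>+b. \<integral>\<^sup>+a. f (x(k := c, j := b, i := a)) \<partial>M i \<partial>M j \<partial>M k \<partial>PiM I M)"
proof -
  have f1: "(\<lambda>y. \<integral>\<^sup>+a. f (y(i := a)) \<partial>M i) \<in> borel_measurable (PiM (insert j (insert k I)) M)"
    by (rule borel_measurable_nn_integral_update[OF f])
  have f2: "(\<lambda>y. \<integral>\<^sup>+b. \<integral>\<^sup>+a. f (y(j := b, i := a)) \<partial>M i \<partial>M j) \<in> borel_measurable (PiM (insert k I) M)"
    using borel_measurable_nn_integral_update[OF f1] by simp
  have "integral\<^sup>N (PiM (insert i (insert j (insert k I))) M) f
      = (\<integral>\<^sup>+y. \<integral>\<^sup>+a. f (y(i := a)) \<partial>M i \<partial>PiM (insert j (insert k I)) M)"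
    by (rule product_nn_integral_insert) (use assms in auto)
  also have "\<dots> = (\<integral>\<^sup>+y. \<integral>\<^sup>+b. \<integral>\<^sup>+a. f (y(j := b, i := a)) \<partial>M i \<partial>M j \<partial>PiM (insert k I) M)"
    by (rule product_nn_integral_insert) (use assms f1 in auto)
  also have "\<dots> = (\<integral>\<^sup>+x. \<integral>\<^sup>+c. \<integral>\<^sup>+b. \<integral>\<^sup>+a. f (x(k := c, j := b, i := a)) \<partial>M i \<partial>M j \<partial>M k \<partial>PiM I M)"
    by (rule product_nn_integral_insert) (use assms f2 in auto)
  finally show ?thesis .
qed

section \<open>Averaging the drift\<close>

lemma sum_le_of_potential_drift:
  fixes p :: "nat \<Rightarrow> real" and V :: "nat \<Rightarrow> ennreal"
  assumes c: "0 \<le> c1" "0 \<le> c0" and p: "\<And>k. 0 \<le> p k" "\<And>k. p k \<le> 1" and V0: "V 0 = 0"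
    and drift: "\<And>k. ennreal (c1 * p k) + V (Suc k) \<le> V k + ennreal (c0 * (1 - p k))"
  shows "c1 * (\<Sum>k<N. p k) \<le> c0 * (\<Sum>k<N. 1 - p k)"
proof -
  have nonneg: "0 \<le> c1 * (\<Sum>k<N. p k)" "0 \<le> c0 * (\<Sum>k<N. 1 - p k)" for N
    using c p by (simp_all add: sum_nonneg)
  have "ennreal (c1 * (\<Sum>k<N. p k)) + V N \<le> ennreal (c0 * (\<Sum>k<N. 1 - p k))"
  proof (induction N)
    case (Suc N)
    have "ennreal (c1 * (\<Sum>k<Suc N. p k)) + V (Suc N)
        = ennreal (c1 * (\<Sum>k<N. p k)) + (ennreal (c1 * p N) + V (Suc N))"
      using nonneg[of N] c p by (simp add: distrib_left ennreal_plus add.assoc)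
    also have "\<dots> \<le> ennreal (c1 * (\<Sum>k<N. p k)) + V N + ennreal (c0 * (1 - p N))"
      by (simp only: add.assoc) (rule add_left_mono[OF drift])
    also have "\<dots> \<le> ennreal (c0 * (\<Sum>k<N. 1 - p k)) + ennreal (c0 * (1 - p N))"
      using Suc.IH by (rule add_right_mono)
    also have "\<dots> = ennreal (c0 * (\<Sum>k<Suc N. 1 - p k))"
      using nonneg[of N] c p by (simp add: distrib_left ennreal_plus)
    finally show ?case .
  qed (simp add: V0)
  then have "ennreal (c1 * (\<Sum>k<N. p k)) \<le> ennreal (c0 * (\<Sum>k<N. 1 - p k))"
    by (rule order_trans[rotated]) simp
  then show ?thesis using nonneg by (simp add: ennreal_le_iff)
qed

lemma frac1_eq_sum: "frac1 Z \<omega> N = (\<Sum>k<N. if req_type1 Z \<omega> k then 1 else 0) / real N"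
  by (simp add: frac1_def sum.If_cases Int_def)

lemma abs_frac1_le_1: "\<bar>frac1 Z \<omega> N\<bar> \<le> 1"
proof -
  have "card {n \<in> {..<N}. req_type1 Z \<omega> n} \<le> N"
    using card_mono[of "{..<N}" "{n \<in> {..<N}. req_type1 Z \<omega> n}"] by auto
  then show ?thesis by (cases "N = 0") (simp_all add: frac1_def divide_le_eq_1)
qed

lemma (in prob_space) limit_le_of_expectation_le:
  fixes X :: "nat \<Rightarrow> 'a \<Rightarrow> real"
  assumes [measurable]: "\<And>n. X n \<in> borel_measurable M"
    and bounded: "\<And>n x. \<bar>X n x\<bar> \<le> C"
    and lim: "AE x in M. (\<lambda>n. X n x) \<longlonglongrightarrow> f"
    and le: "eventually (\<lambda>n. expectation (X n) \<le> \<beta>) sequentially"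
  shows "f \<le> \<beta>"
proof -
  have "(\<lambda>n. expectation (X n)) \<longlonglongrightarrow> expectation (\<lambda>_. f)"
    by (rule integral_dominated_convergence[where w = "\<lambda>_. C"]) (use bounded lim in auto)
  from tendsto_upperbound[OF this le trivial_limit_sequentially] show ?thesis
    by (simp add: prob_space)
qed

locale fj_fa = prob_space M for M :: "'w measure" +
  fixes Z :: "idx \<Rightarrow> 'w \<Rightarrow> real" and gam mu :: real
  assumes gam_pos: "0 < gam" and mu_pos: "0 < mu"
    and indep_Z: "indep_vars (\<lambda>_. borel) Z UNIV"
    and SysS_exp: "\<And>n. distributed M lborel (Z (SysS n)) (exponential_density gam)"
    and RecB_exp: "\<And>n. distributed M lborel (Z (RecB n)) (exponential_density mu)"
    and RecC_exp: "\<And>n. distributed M lborel (Z (RecC n)) (exponential_density mu)"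
begin

lemma random_variable_Z [measurable]: "Z i \<in> borel_measurable M"
  using indep_Z by (simp add: indep_vars_def)

lemma measurable_start_Z [measurable]:
  "(\<lambda>\<omega>. start_b (\<lambda>i. Z i \<omega>) n) \<in> borel_measurable M" "(\<lambda>\<omega>. start_c (\<lambda>i. Z i \<omega>) n) \<in> borel_measurable M"
  by (rule measurable_start; simp)+

lemma pred_req_type1 [measurable]: "Measurable.pred M (\<lambda>\<omega>. req_type1 Z \<omega> n)"
  unfolding req_type1_iff early_recovery_def by measurable

lemma distr_services:
  "distr M borel (Z (SysS n)) = exp_dist gam" "distr M borel (Z (RecB n)) = exp_dist mu"
  "distr M borel (Z (RecC n)) = exp_dist mu"
proof -
  have "distr M borel (Z i) = distr M lborel (Z i)" for i by (rule distr_cong) auto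
  then show "distr M borel (Z (SysS n)) = exp_dist gam" "distr M borel (Z (RecB n)) = exp_dist mu"
    "distr M borel (Z (RecC n)) = exp_dist mu"
    using SysS_exp RecB_exp RecC_exp by (simp_all add: distributed_def)
qed

lemma nn_integral_disintegrate_services:
  fixes \<Phi> :: "real \<Rightarrow> real \<Rightarrow> real \<times> real \<times> real \<Rightarrow> ennreal"
  assumes \<Phi>_meas: "(\<lambda>(u, v, q). \<Phi> u v q) \<in> borel_measurable (borel \<Otimes>\<^sub>M borel \<Otimes>\<^sub>M services gam mu)"
  shows "(\<integral>\<^sup>+\<omega>. \<Phi> (start_b (\<lambda>i. Z i \<omega>) n) (start_c (\<lambda>i. Z i \<omega>) n)
                 (Z (RecC n) \<omega>, Z (RecB n) \<omega>, Z (SysS n) \<omega>) \<partial>M)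
    = (\<integral>\<^sup>+x. \<integral>\<^sup>+q. \<Phi> (start_b x n) (start_c x n) q \<partial>services gam mu
         \<partial>PiM (past_idx n) (\<lambda>i. distr M borel (Z i)))"
proof -
  define I where "I = past_idx n"
  define J where "J = insert (SysS n) (insert (RecB n) (insert (RecC n) I))"
  define D where "D = (\<lambda>i. distr M borel (Z i))"
  define F where "F = (\<lambda>x. \<Phi> (start_b x n) (start_c x n) (x (RecC n), x (RecB n), x (SysS n)))"
  interpret D: product_sigma_finite D
    unfolding product_sigma_finite_def D_def by (auto intro!: prob_space_imp_sigma_finite prob_space_distr)
  have new: "SysS n \<notin> insert (RecB n) (insert (RecC n) I)" "RecB n \<notin> insert (RecC n) I" "RecC n \<notin> I"
    by (auto simp: I_def past_idx_def)
  have F_borel: "F \<in> borel_measurable (PiM J (\<lambda>_. borel))"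
    unfolding F_def by (rule measurable_start_services_PiM[OF \<Phi>_meas])
  have "sets (PiM J D) = sets (PiM J (\<lambda>_. borel))" by (rule sets_PiM_cong) (auto simp: D_def)
  with F_borel have F_meas: "F \<in> borel_measurable (PiM J D)" by (simp cong: measurable_cong_sets)
  have "(\<integral>\<^sup>+\<omega>. \<Phi> (start_b (\<lambda>i. Z i \<omega>) n) (start_c (\<lambda>i. Z i \<omega>) n)
                 (Z (RecC n) \<omega>, Z (RecB n) \<omega>, Z (SysS n) \<omega>) \<partial>M)
      = (\<integral>\<^sup>+\<omega>. F (\<lambda>i\<in>J. Z i \<omega>) \<partial>M)"
    unfolding F_def using start_cong[of n "\<lambda>i\<in>J. Z i _" "\<lambda>i. Z i _"]
    by (simp add: J_def I_def)
  also have "\<dots> = integral\<^sup>N (distr M (PiM J (\<lambda>_. borel)) (\<lambda>\<omega>. \<lambda>i\<in>J. Z i \<omega>)) F"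
    using F_borel by (intro nn_integral_distr[symmetric] measurable_restrict) simp_all
  also have "\<dots> = integral\<^sup>N (PiM J D) F"
    using indep_vars_iff_distr_eq_PiM[of J Z "\<lambda>_. borel"] indep_vars_subset[OF indep_Z]
    by (simp add: D_def J_def)
  also have "\<dots> = (\<integral>\<^sup>+x. \<integral>\<^sup>+c. \<integral>\<^sup>+b. \<integral>\<^sup>+a. F (x(RecC n := c, RecB n := b, SysS n := a))
                     \<partial>D (SysS n) \<partial>D (RecB n) \<partial>D (RecC n) \<partial>PiM I D)"
    unfolding J_def by (rule D.product_nn_integral_insert3[OF finite_past_idx[of n, folded I_def] new])
      (use F_meas in \<open>simp add: J_def\<close>)
  also have "\<dots> = (\<integral>\<^sup>+x. \<integral>\<^sup>+q. \<Phi> (start_b x n) (start_c x n) q \<partial>services gam mu \<partial>PiM I D)"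
  proof (rule nn_integral_cong)
    fix x
    have "start_b (x(RecC n := c, RecB n := b, SysS n := a)) n = start_b x n"
      "start_c (x(RecC n := c, RecB n := b, SysS n := a)) n = start_c x n" for a b c
      by (rule start_cong; auto simp: past_idx_def)+
    then show "(\<integral>\<^sup>+c. \<integral>\<^sup>+b. \<integral>\<^sup>+a. F (x(RecC n := c, RecB n := b, SysS n := a))
                  \<partial>D (SysS n) \<partial>D (RecB n) \<partial>D (RecC n))
        = (\<integral>\<^sup>+q. \<Phi> (start_b x n) (start_c x n) q \<partial>services gam mu)"
      using \<Phi>_meas
      by (simp add: F_def D_def distr_services nn_integral_services[OF gam_pos mu_pos])
  qed
  finally show ?thesis unfolding I_def D_def .
qed

definition type1_prob :: "nat \<Rightarrow> real" where
  "type1_prob n = prob {\<omega> \<in> space M. req_type1 Z \<omega> n}"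

definition mean_lead :: "nat \<Rightarrow> ennreal" where
  "mean_lead n = (\<integral>\<^sup>+\<omega>. ennreal (lead (\<lambda>i. Z i \<omega>) n) \<partial>M)"

lemma nn_integral_if_type1:
  assumes "0 \<le> k"
  shows "(\<integral>\<^sup>+\<omega>. (if req_type1 Z \<omega> n then ennreal k else 0) \<partial>M) = ennreal (k * type1_prob n)"
    and "(\<integral>\<^sup>+\<omega>. (if req_type1 Z \<omega> n then 0 else ennreal k) \<partial>M) = ennreal (k * (1 - type1_prob n))"
proof -
  let ?S = "{\<omega> \<in> space M. req_type1 Z \<omega> n}"
  have S: "?S \<in> events" by measurable
  have "(\<integral>\<^sup>+\<omega>. (if req_type1 Z \<omega> n then ennreal k else 0) \<partial>M) = ennreal k * emeasure M ?S"
    by (subst nn_integral_cmult_indicator[symmetric, OF S]) (auto intro!: nn_integral_cong)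
  then show "(\<integral>\<^sup>+\<omega>. (if req_type1 Z \<omega> n then ennreal k else 0) \<partial>M) = ennreal (k * type1_prob n)"
    using assms by (simp add: type1_prob_def emeasure_eq_measure ennreal_mult)
  have "(\<integral>\<^sup>+\<omega>. (if req_type1 Z \<omega> n then 0 else ennreal k) \<partial>M) = ennreal k * emeasure M (space M - ?S)"
    by (subst nn_integral_cmult_indicator[symmetric]) (auto intro!: nn_integral_cong)
  then show "(\<integral>\<^sup>+\<omega>. (if req_type1 Z \<omega> n then 0 else ennreal k) \<partial>M) = ennreal (k * (1 - type1_prob n))"
    using S assms by (simp add: type1_prob_def emeasure_eq_measure prob_compl ennreal_mult)
qed

lemma lead_drift:
  defines "c1 \<equiv> gam / (mu * (gam + mu))" and "c0 \<equiv> 2 * mu / ((gam + 2 * mu) * (gam + mu))"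
  shows "ennreal (c1 * type1_prob n) + mean_lead (Suc n) \<le> mean_lead n + ennreal (c0 * (1 - type1_prob n))"
proof -
  have c: "0 \<le> c1" "0 \<le> c0" using gam_pos mu_pos by (simp_all add: c1_def c0_def)
  define \<Phi>1 :: "real \<Rightarrow> real \<Rightarrow> real \<times> real \<times> real \<Rightarrow> ennreal" where "\<Phi>1 u v = (\<lambda>(c, b, a). (if early_recovery u v b c then ennreal c1 else 0)
      + ennreal \<bar>min (max u v + a) (u + b) - min (max u v + a) (v + c)\<bar>)" for u v
  define \<Phi>0 :: "real \<Rightarrow> real \<Rightarrow> real \<times> real \<times> real \<Rightarrow> ennreal" where "\<Phi>0 u v = (\<lambda>(c, b, a). ennreal \<bar>u - v\<bar> + (if early_recovery u v b c then 0 else ennreal c0))"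
    for u v
  have [measurable]: "(\<lambda>(u, v, q). \<Phi>1 u v q) \<in> borel_measurable (borel \<Otimes>\<^sub>M borel \<Otimes>\<^sub>M services gam mu)"
    "(\<lambda>(u, v, q). \<Phi>0 u v q) \<in> borel_measurable (borel \<Otimes>\<^sub>M borel \<Otimes>\<^sub>M services gam mu)"
    unfolding \<Phi>1_def \<Phi>0_def early_recovery_def by measurable
  let ?u = "\<lambda>\<omega>. start_b (\<lambda>i. Z i \<omega>) n" and ?v = "\<lambda>\<omega>. start_c (\<lambda>i. Z i \<omega>) n"
  let ?q = "\<lambda>\<omega>. (Z (RecC n) \<omega>, Z (RecB n) \<omega>, Z (SysS n) \<omega>)"
  let ?P = "PiM (past_idx n) (\<lambda>i. distr M borel (Z i))"
  have "ennreal (c1 * type1_prob n) + mean_lead (Suc n)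
      = (\<integral>\<^sup>+\<omega>. (if req_type1 Z \<omega> n then ennreal c1 else 0) + ennreal (lead (\<lambda>i. Z i \<omega>) (Suc n)) \<partial>M)"
    unfolding mean_lead_def nn_integral_if_type1(1)[OF c(1), symmetric] lead_def
    by (rule nn_integral_add[symmetric]) auto
  also have "\<dots> \<le> (\<integral>\<^sup>+\<omega>. \<Phi>1 (?u \<omega>) (?v \<omega>) (?q \<omega>) \<partial>M)"
    unfolding \<Phi>1_def req_type1_iff
    by (intro nn_integral_mono add_mono) (auto intro: lead_Suc_le)
  also have "\<dots> = (\<integral>\<^sup>+x. \<integral>\<^sup>+q. \<Phi>1 (start_b x n) (start_c x n) q \<partial>services gam mu \<partial>?P)"
    by (rule nn_integral_disintegrate_services) measurable
  also have "\<dots> \<le> (\<integral>\<^sup>+x. \<integral>\<^sup>+q. \<Phi>0 (start_b x n) (start_c x n) q \<partial>services gam mu \<partial>?P)"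
    unfolding \<Phi>1_def \<Phi>0_def c1_def c0_def
    by (intro nn_integral_mono conditional_lead_drift gam_pos mu_pos)
  also have "\<dots> = (\<integral>\<^sup>+\<omega>. \<Phi>0 (?u \<omega>) (?v \<omega>) (?q \<omega>) \<partial>M)"
    by (rule nn_integral_disintegrate_services[symmetric]) measurable
  also have "\<dots> = (\<integral>\<^sup>+\<omega>. ennreal (lead (\<lambda>i. Z i \<omega>) n) + (if req_type1 Z \<omega> n then 0 else ennreal c0) \<partial>M)"
    by (simp add: \<Phi>0_def req_type1_iff lead_def)
  also have "\<dots> = mean_lead n + ennreal (c0 * (1 - type1_prob n))"
    unfolding mean_lead_def nn_integral_if_type1(2)[OF c(2), symmetric] lead_def
    by (rule nn_integral_add) auto
  finally show ?thesis .
qed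

lemma expectation_frac1: "expectation (\<lambda>\<omega>. frac1 Z \<omega> N) = (\<Sum>k<N. type1_prob k) / real N"
proof -
  have "expectation (\<lambda>\<omega>. if req_type1 Z \<omega> k then 1 else 0)
      = expectation (indicator {\<omega> \<in> space M. req_type1 Z \<omega> k})" for k
    by (rule Bochner_Integration.integral_cong) (auto simp: indicator_def)
  also have "\<dots> k = type1_prob k" for k
    by (simp add: type1_prob_def Int_absorb2)
  finally have "expectation (\<lambda>\<omega>. if req_type1 Z \<omega> k then 1 else 0) = type1_prob k" for k .
  moreover have "integrable M (\<lambda>\<omega>. if req_type1 Z \<omega> k then 1 else 0 :: real)" for k
    by (rule integrable_const_bound[where B = 1]) auto
  ultimately show ?thesis
    unfolding frac1_eq_sum by (simp add: Bochner_Integration.integral_sum)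
qed

lemma sum_type1_prob_le:
  "(\<Sum>k<N. type1_prob k) \<le> 2 * mu\<^sup>2 / (gam * (gam + 2 * mu) + 2 * mu\<^sup>2) * real N"
proof -
  define c1 where "c1 = gam / (mu * (gam + mu))"
  define c0 where "c0 = 2 * mu / ((gam + 2 * mu) * (gam + mu))"
  define S where "S = (\<Sum>k<N. type1_prob k)"
  have "c1 * S \<le> c0 * (\<Sum>k<N. 1 - type1_prob k)"
    unfolding S_def
  proof (rule sum_le_of_potential_drift[where V = mean_lead])
    show "mean_lead 0 = 0" by (simp add: mean_lead_def)
    show "ennreal (c1 * type1_prob k) + mean_lead (Suc k) \<le> mean_lead k + ennreal (c0 * (1 - type1_prob k))"
      for k unfolding c1_def c0_def by (rule lead_drift)
  qed (use gam_pos mu_pos in \<open>simp_all add: c1_def c0_def type1_prob_def\<close>)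
  then have "c1 * S \<le> c0 * (real N - S)"
    by (simp add: S_def sum_subtractf)
  then have "(c1 * (mu * (gam + mu) * (gam + 2 * mu))) * S
      \<le> (c0 * (mu * (gam + mu) * (gam + 2 * mu))) * (real N - S)"
    using gam_pos mu_pos by (simp add: mult.assoc mult.left_commute[of "mu * _"])
  then have "gam * (gam + 2 * mu) * S \<le> 2 * mu\<^sup>2 * (real N - S)"
    using gam_pos mu_pos by (simp add: c1_def c0_def power2_eq_square)
  then show ?thesis
    using gam_pos mu_pos by (simp add: S_def field_simps add_pos_pos)
qed

lemma type1_limit_le:
  assumes "AE \<omega> in M. frac1 Z \<omega> \<longlonglongrightarrow> f1"
  shows "f1 \<le> 2 * mu\<^sup>2 / (gam * (gam + 2 * mu) + 2 * mu\<^sup>2)"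
proof (rule limit_le_of_expectation_le[where X = "\<lambda>N \<omega>. frac1 Z \<omega> N"])
  show "(\<lambda>\<omega>. frac1 Z \<omega> N) \<in> borel_measurable M" for N
    unfolding frac1_eq_sum by measurable
  show "eventually (\<lambda>N. expectation (\<lambda>\<omega>. frac1 Z \<omega> N) \<le> 2 * mu\<^sup>2 / (gam * (gam + 2 * mu) + 2 * mu\<^sup>2))
      sequentially"
    using eventually_gt_at_top[of 0]
  proof eventually_elim
    case (elim N)
    have "expectation (\<lambda>\<omega>. frac1 Z \<omega> N)
        \<le> 2 * mu\<^sup>2 / (gam * (gam + 2 * mu) + 2 * mu\<^sup>2) * real N / real N"
      unfolding expectation_frac1 by (intro divide_right_mono sum_type1_prob_le) simp
    with elim show ?case by simp
  qed
qed (use assms abs_frac1_le_1 in auto)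

end

theorem theorem6:
  fixes M :: "'w measure" and Z :: "idx \<Rightarrow> 'w \<Rightarrow> real"
    and lam gam mu f0 f1 :: real
  assumes "prob_space M"
    and "lam > 0" and "gam > 0" and "mu > 0"
    and "prob_space.indep_vars M (\<lambda>_. borel) Z UNIV"
    and "\<And>n. distributed M lborel (Z (Arr n)) (exponential_density lam)"
    and "\<And>n. distributed M lborel (Z (SysS n)) (exponential_density gam)"
    and "\<And>n. distributed M lborel (Z (RecB n)) (exponential_density mu)"
    and "\<And>n. distributed M lborel (Z (RecC n)) (exponential_density mu)"
    and "AE \<omega> in M. frac0 Z \<omega> \<longlonglongrightarrow> f0"
    and "AE \<omega> in M. frac1 Z \<omega> \<longlonglongrightarrow> f1"
    and "f0 + f1 = 1"
  shows "f0 \<ge> gam * (gam + 2 * mu) / (gam * (gam + 2 * mu) + 2 * mu ^ 2)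
       \<and> f1 \<le> 2 * mu ^ 2 / (gam * (gam + 2 * mu) + 2 * mu ^ 2)"
proof -
  interpret fj_fa M Z gam mu
    using assms by (simp add: fj_fa_def fj_fa_axioms_def)
  have f1: "f1 \<le> 2 * mu ^ 2 / (gam * (gam + 2 * mu) + 2 * mu ^ 2)"
    using type1_limit_le assms(11) by blast
  have "gam * (gam + 2 * mu) / (gam * (gam + 2 * mu) + 2 * mu ^ 2)
      = 1 - 2 * mu ^ 2 / (gam * (gam + 2 * mu) + 2 * mu ^ 2)"
  proof -
    have "0 < gam * (gam + 2 * mu) + 2 * mu ^ 2"
      using assms(3,4) by (intro add_pos_pos mult_pos_pos zero_less_power) auto
    then show ?thesis by (simp add: field_simps)
  qed
  with f1 assms(12) show ?thesis by linarith
qed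

end
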